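(* Let $\mu$ be a classification problem with Bayes regressor $f^*$, $r^*_a:=f^*\sharp(\mu^X_a\times\{a\})$, and fix $q\in\mathcal Q_k$. For each $a\in[m]$ let $\gamma^*_a\in\Gamma(r^*_a,q)$ be an optimal coupling for the cost $c(s,y)=\|s-y\|_1$, and let $T^*_{a}:\Delta_k\to\mathcal Y$ be the randomized function induced by $\gamma^*_a$, i.e. with Markov kernel $K_a(s,B)=\gamma^*_a(B\mid s)$ (a regular conditional distribution of $\gamma^*_a$ given the first coordinate). Define the randomized classifier $\bar h(x,a)=T^*_a(f^*(x,a))$. Then $$\sum_{a\in[m]}\mathrm{Err}_a(\bar h)=\frac12\sum_{a\in[m]}W_1(r^*_a,q)\quad\text{and}\quad \mathbb P(\bar h(X,a)=y\mid A=a)=q(y)\ \ \forall a\in[m],\,y\in\mathcal Y;$$ in particular $\bar h$ satisfies demographic parity.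
   Context: Setup. $\mathcal X$ is a standard Borel space, $k\ge 2$, $\mathcal Y=\{e_1,\dots,e_k\}\subset\mathbb R^k$ is the set of standard basis vectors (one-hot labels), and $\mathcal A=[m]=\{1,\dots,m\}$. A classification problem is a probability distribution $\mu$ of a triple $(X,Y,A)$ on $\mathcal X\times\mathcal Y\times\mathcal A$ with $\mathbb P(A=a)>0$ for every $a$; $\mu_a$ is $\mu$ conditioned on $A=a$ and $\mu^X_a$ is the law of $X$ under $\mu_a$. A randomized function $f:\mathcal U\to\mathcal V$ is given by a Markov kernel $K$ with $\mathbb P(f(u)\in B)=K(u,B)$; its internal randomness is independent of $(X,Y,A)$. A (randomized) classifier is a randomized function $h:\mathcal X\times\mathcal A\to\mathcal Y$, and $\mathrm{Err}_a(h):=\mathbb P(h(X,a)\neq Y\mid A=a)$, over $\mu$ and the randomness of $h$. $h$ satisfies demographic parity (DP) if $\mathbb P(h(X,a)=y\mid A=a)=\mathbb P(h(X,a')=y\mid A=a')$ for all $y,a,a'$. $\Delta_k=\{x\in\mathbb R^k:x\ge0,\ \sum_i x_i=1\}$. The Bayes regressor is $f^*(x,a)=\mathbb E_\mu[Y\mid X=x,A=a]\in\Delta_k$, and $f^*\sharp(\mu^X_a\times\{a\})$ is the law of $f^*(X,a)$ for $X\sim\mu^X_a$. $\mathcal Q_k$ is the set of probability distributions supported on $\mathcal Y$. $\Gamma(p,q)$ is the set of couplings of $p$ and $q$, and $W_1(p,q)=\inf_{\gamma\in\Gamma(p,q)}\int\|s-s'\|_1\,d\gamma(s,s')$. *)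

theory Defs
  imports "HOL-Probability.Probability"
begin

text \<open>Outcomes of the triple (X,Y,A) are elements of type 'x \<times> (real^'k) \<times> nat.
  Labels Y are one-hot vectors in real^'k; groups A are 1..m.\<close>

definition labels :: "(real^'k) set" where
  "labels = range (\<lambda>i. axis i (1::real))"

definition prob_simplex :: "(real^'k) set" where
  "prob_simplex = {s. (\<forall>i. 0 \<le> s $ i) \<and> (\<Sum>i\<in>UNIV. s $ i) = 1}"

definition l1dist :: "real^'k \<Rightarrow> real^'k \<Rightarrow> real" where
  "l1dist s s' = (\<Sum>i\<in>UNIV. \<bar>s $ i - s' $ i\<bar>)"

definition classification_problem ::
    "nat \<Rightarrow> ('x::polish_space \<times> (real^'k) \<times> nat) measure \<Rightarrow> bool" where
  "classification_problem m M \<longleftrightarrow>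
     prob_space M \<and>
     sets M = sets (borel \<Otimes>\<^sub>M borel \<Otimes>\<^sub>M count_space UNIV) \<and>
     (AE \<omega> in M. fst (snd \<omega>) \<in> labels \<and> snd (snd \<omega>) \<in> {1..m}) \<and>
     (\<forall>a\<in>{1..m}. measure M {\<omega>\<in>space M. snd (snd \<omega>) = a} > 0)"

definition cond_group :: "('x \<times> 'y \<times> nat) measure \<Rightarrow> nat \<Rightarrow> ('x \<times> 'y \<times> nat) measure" where
  "cond_group M a = uniform_measure M {\<omega>\<in>space M. snd (snd \<omega>) = a}"

definition marg_X :: "('x::topological_space \<times> 'y \<times> nat) measure \<Rightarrow> nat \<Rightarrow> 'x measure" where
  "marg_X M a = distr (cond_group M a) borel fst"

text \<open>Bayes regressor f*(x,a) = E[Y | X = x, A = a] (a version of the conditional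
  expectation, taking values in the prob_simplex): measurable, and for every Borel B and group a,
  E[Y 1{X \<in> B, A = a}] = E[f*(X,A) 1{X \<in> B, A = a}].\<close>
definition bayes_regressor ::
    "nat \<Rightarrow> ('x::polish_space \<times> (real^'k) \<times> nat) measure \<Rightarrow> ('x \<Rightarrow> nat \<Rightarrow> real^'k) \<Rightarrow> bool" where
  "bayes_regressor m M f \<longleftrightarrow>
     (\<lambda>(x,a). f x a) \<in> borel_measurable (borel \<Otimes>\<^sub>M count_space UNIV) \<and>
     (\<forall>x. \<forall>a\<in>{1..m}. f x a \<in> prob_simplex) \<and>
     (\<forall>a\<in>{1..m}. \<forall>B\<in>sets borel.
        (\<integral>\<omega>. indicator {\<omega>. fst \<omega> \<in> B \<and> snd (snd \<omega>) = a} \<omega> *\<^sub>R fst (snd \<omega>) \<partial>M)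
      = (\<integral>\<omega>. indicator {\<omega>. fst \<omega> \<in> B \<and> snd (snd \<omega>) = a} \<omega> *\<^sub>R f (fst \<omega>) (snd (snd \<omega>)) \<partial>M))"

definition Qk :: "(real^'k) measure \<Rightarrow> bool" where
  "Qk q \<longleftrightarrow> prob_space q \<and> sets q = sets borel \<and> emeasure q labels = 1"

definition couplings :: "'a::topological_space measure \<Rightarrow> 'b::topological_space measure \<Rightarrow> ('a \<times> 'b) measure set" where
  "couplings p q = {\<gamma>. prob_space \<gamma> \<and> sets \<gamma> = sets (borel \<Otimes>\<^sub>M borel) \<and>
                        distr \<gamma> borel fst = p \<and> distr \<gamma> borel snd = q}"

definition W1 :: "(real^'k) measure \<Rightarrow> (real^'k) measure \<Rightarrow> ennreal" where
  "W1 p q = (INF \<gamma>\<in>couplings p q. \<integral>\<^sup>+\<omega>. ennreal (l1dist (fst \<omega>) (snd \<omega>)) \<partial>\<gamma>)"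

definition optimal_coupling :: "(real^'k) measure \<Rightarrow> (real^'k) measure \<Rightarrow> ((real^'k) \<times> (real^'k)) measure \<Rightarrow> bool" where
  "optimal_coupling p q \<gamma> \<longleftrightarrow> \<gamma> \<in> couplings p q \<and>
     (\<integral>\<^sup>+\<omega>. ennreal (l1dist (fst \<omega>) (snd \<omega>)) \<partial>\<gamma>) = W1 p q"

definition reg_cond_dist :: "('a::topological_space \<times> 'b::topological_space) measure \<Rightarrow> ('a \<Rightarrow> 'b measure) \<Rightarrow> bool" where
  "reg_cond_dist \<gamma> K \<longleftrightarrow> K \<in> borel \<rightarrow>\<^sub>M prob_algebra borel \<and>
     (\<forall>A\<in>sets borel. \<forall>B\<in>sets borel.
        emeasure \<gamma> (A \<times> B) = (\<integral>\<^sup>+s. indicator A s * emeasure (K s) B \<partial>(distr \<gamma> borel fst)))"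

text \<open>A randomized classifier is given by its kernel H x a (a probability measure on labels).
  Err_a(h) = P(h(X,a) \<noteq> Y | A = a), and P(h(X,a) = y | A = a).\<close>
definition err_group :: "('x \<times> 'y \<times> nat) measure \<Rightarrow> ('x \<Rightarrow> nat \<Rightarrow> 'y measure) \<Rightarrow> nat \<Rightarrow> real" where
  "err_group M H a = (\<integral>\<omega>. measure (H (fst \<omega>) a) (space (H (fst \<omega>) a) - {fst (snd \<omega>)}) \<partial>(cond_group M a))"

definition pred_prob :: "('x \<times> 'y \<times> nat) measure \<Rightarrow> ('x \<Rightarrow> nat \<Rightarrow> 'y measure) \<Rightarrow> nat \<Rightarrow> 'y \<Rightarrow> real" where
  "pred_prob M H a y = (\<integral>\<omega>. measure (H (fst \<omega>) a) {y} \<partial>(cond_group M a))"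

definition demographic_parity :: "nat \<Rightarrow> ('x \<times> (real^'k) \<times> nat) measure \<Rightarrow> ('x \<Rightarrow> nat \<Rightarrow> (real^'k) measure) \<Rightarrow> bool" where
  "demographic_parity m M H \<longleftrightarrow>
     (\<forall>y\<in>labels. \<forall>a\<in>{1..m}. \<forall>a'\<in>{1..m}. pred_prob M H a y = pred_prob M H a' y)"

end

theory Submission
  imports Defs
begin

(* For s in the simplex, the l1 distance from s to the label e_j is 2 - 2 s_j.  Hence any coupling
   gamma of r_a and q with disintegration K has transport cost 2 - 2 sum_j int s_j K(s,{e_j}) dr_a(s).
   The classifier K(f*(X,a)) errs with probability 1 - sum_j E[Y_j K(f*(X,a),{e_j}) | A = a], and
   since f* is the conditional expectation of Y given X, Y_j may be replaced by f*_j(X,a), which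
   turns the error into 1 - sum_j int s_j K(s,{e_j}) dr_a(s).  For an optimal coupling the cost is
   W_1, so W_1 is twice the error.  The prediction law is r_a pushed through K, i.e. the second
   marginal q of gamma. *)

section \<open>Labels and the probability simplex\<close>

lemma borel_measurable_vec_nth[measurable]:
  "f \<in> borel_measurable M \<Longrightarrow> (\<lambda>x. f x $ i :: real) \<in> borel_measurable M"
  using measurable_compose[OF _ borel_measurable_nth] .

lemma finite_labels: "finite labels"
  unfolding labels_def by simp

lemma labels_in_borel[measurable]: "labels \<in> sets borel"
  using finite_labels by (intro borel_closed finite_imp_closed)

lemma prob_simplex_in_borel[measurable]: "prob_simplex \<in> sets borel"
proof -
  have "prob_simplex = {s \<in> space borel. (\<forall>i. 0 \<le> s $ i) \<and> (\<Sum>i\<in>UNIV. s $ i) = 1}"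
    by (simp add: prob_simplex_def)
  also have "\<dots> \<in> sets borel"
    by measurable
  finally show ?thesis .
qed

lemma indicator_axis_label: "y \<in> labels \<Longrightarrow> indicator {axis j 1} y = y $ j"
  by (auto simp: labels_def indicator_def axis_def axis_eq_axis)

lemma sum_axis_mult: "(\<Sum>j\<in>UNIV. axis i (1::real) $ j * c j) = c i"
  by (simp add: axis_def if_distrib[of "\<lambda>x. x * _"] cong: if_cong)

lemma prob_simplex_nth_le_1:
  assumes "s \<in> prob_simplex" shows "s $ i \<le> 1"
proof -
  have "s $ i \<le> (\<Sum>j\<in>UNIV. s $ j)"
    using assms by (intro member_le_sum) (auto simp: prob_simplex_def)
  then show ?thesis using assms by (simp add: prob_simplex_def)
qed

lemma l1dist_prob_simplex_axis:
  assumes s: "s \<in> prob_simplex" shows "l1dist s (axis i 1) = 2 - 2 * s $ i"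
proof -
  have "l1dist s (axis i 1) = (1 - s $ i) + (\<Sum>j\<in>UNIV - {i}. s $ j)"
    unfolding l1dist_def using s prob_simplex_nth_le_1[OF s, of i]
    by (subst sum.remove[of _ i]) (auto simp: axis_def prob_simplex_def intro!: sum.cong)
  also have "(\<Sum>j\<in>UNIV - {i}. s $ j) = 1 - s $ i"
    using s sum.remove[of UNIV i "\<lambda>j. s $ j"] by (simp add: prob_simplex_def)
  finally show ?thesis by simp
qed

lemma l1dist_prob_simplex_label:
  assumes "s \<in> prob_simplex" "y \<in> labels"
  shows "l1dist s y = (\<Sum>j\<in>UNIV. (2 - 2 * s $ j) * y $ j)"
  using assms by (auto simp: labels_def l1dist_prob_simplex_axis sum_axis_mult mult.commute)

lemma measure_labels_eq_sum:
  assumes "finite_measure N" "sets N = sets borel"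
  shows "measure N labels = (\<Sum>j\<in>UNIV. measure N {axis j 1})"
proof -
  have "measure N labels = (\<Sum>y\<in>labels. measure N {y})"
    using assms finite_labels by (intro finite_measure.finite_measure_eq_sum_singleton) auto
  also have "\<dots> = (\<Sum>j\<in>UNIV. measure N {axis j 1})"
    unfolding labels_def by (subst sum.reindex) (auto simp: inj_on_def axis_eq_axis)
  finally show ?thesis .
qed

lemma measure_compl_singleton_labels:
  assumes N: "prob_space N" "sets N = sets borel" "emeasure N labels = 1"
  shows "measure N (space N - {y}) = 1 - (\<Sum>j\<in>UNIV. indicator {axis j 1} y * measure N {axis j 1})"
proof (cases "y \<in> labels")
  case True
  then show ?thesis
    using N by (auto simp: labels_def indicator_axis_label sum_axis_mult prob_space.prob_compl)
next
  case False
  have "measure N {y} \<le> measure N (space N - labels)"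
    using N False by (intro finite_measure.finite_measure_mono prob_space.finite_measure)
      (auto simp: sets_eq_imp_space_eq[OF N(2)])
  also have "\<dots> = 0"
    using N by (simp add: prob_space.prob_compl finite_measure.emeasure_eq_measure prob_space.finite_measure)
  finally have "measure N {y} = 0"
    by (simp add: measure_le_0_iff)
  moreover have "indicator {axis j 1} y = (0::real)" for j
    using False by (auto simp: labels_def indicator_def)
  ultimately show ?thesis
    using N by (simp add: prob_space.prob_compl)
qed

section \<open>Disintegration of couplings\<close>

lemma measurable_kernel_measure:
  assumes "K \<in> N \<rightarrow>\<^sub>M prob_algebra M" "B \<in> sets M"
  shows "(\<lambda>s. measure (K s) B) \<in> borel_measurable N"
  unfolding measure_def
  by (intro borel_measurable_enn2real measurable_compose[OF measurable_prob_algebraD[OF assms(1)]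
        measurable_emeasure_subprob_algebra[OF assms(2)]])

lemma prob_kernelD:
  assumes "K \<in> N \<rightarrow>\<^sub>M prob_algebra M" "s \<in> space N"
  shows "prob_space (K s)" "sets (K s) = sets M"
  using measurable_space[OF assms] by (auto simp: space_prob_algebra)

lemma reg_cond_dist_measurable: "reg_cond_dist \<gamma> K \<Longrightarrow> K \<in> borel \<rightarrow>\<^sub>M prob_algebra borel"
  by (simp add: reg_cond_dist_def)

lemma reg_cond_dist_distr_density:
  fixes \<gamma> :: "('a::topological_space \<times> 'b::topological_space) measure"
  assumes sets_\<gamma>: "sets \<gamma> = sets (borel \<Otimes>\<^sub>M borel)" and K: "reg_cond_dist \<gamma> K"
    and B: "B \<in> sets borel"
  shows "distr (density \<gamma> (\<lambda>\<omega>. ennreal (indicator B (snd \<omega>)))) borel fst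
       = density (distr \<gamma> borel fst) (\<lambda>s. emeasure (K s) B)"
proof (rule measure_eqI)
  fix A assume "A \<in> sets (distr (density \<gamma> (\<lambda>\<omega>. ennreal (indicator B (snd \<omega>)))) borel fst)"
  then have A: "A \<in> sets borel" by simp
  note sets_\<gamma>[measurable_cong]
  have "space \<gamma> = UNIV"
    using sets_eq_imp_space_eq[OF sets_\<gamma>] by (simp add: space_pair_measure)
  then have "emeasure (distr (density \<gamma> (\<lambda>\<omega>. ennreal (indicator B (snd \<omega>)))) borel fst) A
      = (\<integral>\<^sup>+\<omega>. ennreal (indicator B (snd \<omega>)) * indicator (fst -` A \<inter> space \<gamma>) \<omega> \<partial>\<gamma>)"
    using A B measurable_sets[OF measurable_fst[of borel borel] A]
    by (subst emeasure_distr, measurable, subst emeasure_density) (auto simp: sets_\<gamma> space_pair_measure)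
  also have "\<dots> = (\<integral>\<^sup>+\<omega>. indicator (A \<times> B) \<omega> \<partial>\<gamma>)"
    using \<open>space \<gamma> = UNIV\<close> by (intro nn_integral_cong) (auto simp: indicator_def)
  also have "\<dots> = emeasure \<gamma> (A \<times> B)"
    using A B by (simp add: sets_\<gamma>)
  also have "\<dots> = (\<integral>\<^sup>+s. indicator A s * emeasure (K s) B \<partial>distr \<gamma> borel fst)"
    using K A B by (simp add: reg_cond_dist_def)
  also have "\<dots> = emeasure (density (distr \<gamma> borel fst) (\<lambda>s. emeasure (K s) B)) A"
    using A B measurable_compose[OF measurable_prob_algebraD[OF reg_cond_dist_measurable[OF K]]
        measurable_emeasure_subprob_algebra[OF B]]
    by (simp add: emeasure_density mult.commute)
  finally show "emeasure (distr (density \<gamma> (\<lambda>\<omega>. ennreal (indicator B (snd \<omega>)))) borel fst) A =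
      emeasure (density (distr \<gamma> borel fst) (\<lambda>s. emeasure (K s) B)) A" .
qed simp

lemma reg_cond_dist_integral:
  fixes \<gamma> :: "('a::topological_space \<times> 'b::topological_space) measure" and g :: "'a \<Rightarrow> real"
  assumes sets_\<gamma>: "sets \<gamma> = sets (borel \<Otimes>\<^sub>M borel)" and K: "reg_cond_dist \<gamma> K"
    and B: "B \<in> sets borel" and g[measurable]: "g \<in> borel_measurable borel"
  shows "(\<integral>\<omega>. g (fst \<omega>) * indicator B (snd \<omega>) \<partial>\<gamma>) = (\<integral>s. g s * measure (K s) B \<partial>distr \<gamma> borel fst)"
proof -
  note sets_\<gamma>[measurable_cong]
  note K_meas = reg_cond_dist_measurable[OF K]
  have "(\<lambda>s. emeasure (K s) B) = (\<lambda>s. ennreal (measure (K s) B))"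
    using prob_kernelD(1)[OF K_meas]
    by (simp add: finite_measure.emeasure_eq_measure prob_space.finite_measure)
  then have disint: "distr (density \<gamma> (\<lambda>\<omega>. ennreal (indicator B (snd \<omega>)))) borel fst
      = density (distr \<gamma> borel fst) (\<lambda>s. measure (K s) B)"
    using reg_cond_dist_distr_density[OF sets_\<gamma> K B] by simp
  have "(\<integral>\<omega>. indicator B (snd \<omega>) *\<^sub>R g (fst \<omega>) \<partial>\<gamma>)
      = integral\<^sup>L (density \<gamma> (\<lambda>\<omega>. ennreal (indicator B (snd \<omega>)))) (\<lambda>\<omega>. g (fst \<omega>))"
    using B by (subst integral_density) auto
  also have "\<dots> = integral\<^sup>L (distr (density \<gamma> (\<lambda>\<omega>. ennreal (indicator B (snd \<omega>)))) borel fst) g"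
    by (subst integral_distr) auto
  also have "\<dots> = (\<integral>s. measure (K s) B *\<^sub>R g s \<partial>distr \<gamma> borel fst)"
    unfolding disint using measurable_kernel_measure[OF K_meas B] by (subst integral_density) auto
  finally show ?thesis by (simp add: mult.commute)
qed

lemma couplings_marginals:
  assumes "\<gamma> \<in> couplings r q"
  shows "prob_space r" "sets r = sets borel" "prob_space q" "sets q = sets borel"
  using assms prob_space.prob_space_distr[of \<gamma> fst borel] prob_space.prob_space_distr[of \<gamma> snd borel]
  by (auto simp: couplings_def cong: measurable_cong_sets)

lemma AE_couplingI:
  assumes \<gamma>: "\<gamma> \<in> couplings r q" and [measurable]: "Measurable.pred borel P" "Measurable.pred borel Q"
    and "AE s in r. P s" "AE y in q. Q y"
  shows "AE \<omega> in \<gamma>. P (fst \<omega>) \<and> Q (snd \<omega>)"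
proof -
  have sets_\<gamma>[measurable_cong]: "sets \<gamma> = sets (borel \<Otimes>\<^sub>M borel)"
    and "distr \<gamma> borel fst = r" "distr \<gamma> borel snd = q"
    using \<gamma> by (auto simp: couplings_def)
  then have "AE \<omega> in \<gamma>. P (fst \<omega>)" "AE \<omega> in \<gamma>. Q (snd \<omega>)"
    using assms(4,5) by (auto simp: AE_distr_iff)
  then show ?thesis by eventually_elim auto
qed

lemma integral_kernel_coupling:
  assumes \<gamma>: "\<gamma> \<in> couplings r q" and K: "reg_cond_dist \<gamma> K" and B: "B \<in> sets borel"
  shows "(\<integral>s. measure (K s) B \<partial>r) = measure q B"
proof -
  have sets_\<gamma>[measurable_cong]: "sets \<gamma> = sets (borel \<Otimes>\<^sub>M borel)"
    and r: "distr \<gamma> borel fst = r" and q: "distr \<gamma> borel snd = q"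
    using \<gamma> by (auto simp: couplings_def)
  have "(\<integral>s. measure (K s) B \<partial>r) = (\<integral>\<omega>. indicator B (snd \<omega>) \<partial>\<gamma>)"
    using reg_cond_dist_integral[OF sets_\<gamma> K B, of "\<lambda>_. 1"] by (simp add: r)
  also have "\<dots> = integral\<^sup>L (distr \<gamma> borel snd) (indicator B)"
    using B by (subst integral_distr) auto
  also have "\<dots> = measure q B"
    using B couplings_marginals(3,4)[OF \<gamma>]
    by (simp add: q finite_measure.emeasure_finite prob_space.finite_measure)
  finally show ?thesis .
qed

section \<open>Transport cost from the simplex to the labels\<close>

lemma integrable_kernel_measure:
  assumes r: "prob_space r" "sets r = sets borel"
    and K_meas: "K \<in> borel \<rightarrow>\<^sub>M prob_algebra borel" and B: "B \<in> sets borel"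
  shows "integrable r (\<lambda>s. measure (K s) B)"
  using r(2)[measurable_cong] measurable_kernel_measure[OF K_meas B]
    prob_space.prob_le_1[OF prob_kernelD(1)[OF K_meas]]
  by (intro finite_measure.integrable_const_bound[OF prob_space.finite_measure[OF r(1)], where B=1])
    (simp_all cong: measurable_cong_sets)

lemma integrable_nth_mult_kernel_measure:
  assumes r: "prob_space r" "sets r = sets borel" "AE s in r. s \<in> prob_simplex"
    and K_meas: "K \<in> borel \<rightarrow>\<^sub>M prob_algebra borel" and B: "B \<in> sets borel"
  shows "integrable r (\<lambda>s. s $ j * measure (K s) B)"
proof (rule finite_measure.integrable_const_bound[OF prob_space.finite_measure[OF r(1)], where B=1])
  show "AE s in r. norm (s $ j * measure (K s) B) \<le> 1"
    using r(3) by eventually_elim (auto simp: prob_simplex_def prob_simplex_nth_le_1 abs_mult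
        prob_space.prob_le_1[OF prob_kernelD(1)[OF K_meas]] intro: mult_le_one)
  show "(\<lambda>s. s $ j * measure (K s) B) \<in> borel_measurable r"
    using r(2)[measurable_cong] measurable_kernel_measure[OF K_meas B] by measurable
qed

lemma sum_integral_kernel_labels:
  assumes r: "prob_space r" "sets r = sets borel" "AE s in r. s \<in> prob_simplex"
    and K_meas: "K \<in> borel \<rightarrow>\<^sub>M prob_algebra borel"
    and K_labels: "\<forall>s\<in>prob_simplex. emeasure (K s) labels = 1"
  shows "(\<Sum>j\<in>UNIV. \<integral>s. measure (K s) {axis j 1} \<partial>r) = 1"
proof -
  note r(2)[measurable_cong]
  have K: "prob_space (K s)" "sets (K s) = sets borel" for s
    using prob_kernelD[OF K_meas] by simp_all
  note measurable_kernel_measure[OF K_meas, measurable]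
  have "(\<Sum>j\<in>UNIV. \<integral>s. measure (K s) {axis j 1} \<partial>r) = (\<integral>s. (\<Sum>j\<in>UNIV. measure (K s) {axis j 1}) \<partial>r)"
    by (intro Bochner_Integration.integral_sum[symmetric] integrable_kernel_measure[OF r(1,2) K_meas]) simp
  also have "\<dots> = (\<integral>s. 1 \<partial>r)"
  proof (rule integral_cong_AE)
    show "AE s in r. (\<Sum>j\<in>UNIV. measure (K s) {axis j 1}) = 1"
      using r(3) K_labels
      by (auto simp: measure_labels_eq_sum[symmetric] finite_measure.emeasure_eq_measure prob_space.finite_measure K)
  qed measurable
  finally show ?thesis
    using prob_space.prob_space[OF r(1)] by simp
qed

lemma integral_label_cost_coupling:
  fixes r q :: "(real^'k) measure"
  assumes \<gamma>: "\<gamma> \<in> couplings r q" and K: "reg_cond_dist \<gamma> K"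
    and r_simplex: "AE s in r. s \<in> prob_simplex"
  shows "(\<integral>\<omega>. (2 - 2 * fst \<omega> $ j) * indicator {axis j 1} (snd \<omega>) \<partial>\<gamma>)
       = 2 * (\<integral>s. measure (K s) {axis j 1} \<partial>r) - 2 * (\<integral>s. s $ j * measure (K s) {axis j 1} \<partial>r)"
proof -
  have sets_\<gamma>: "sets \<gamma> = sets (borel \<Otimes>\<^sub>M borel)" and r: "distr \<gamma> borel fst = r"
    using \<gamma> by (auto simp: couplings_def)
  note r_facts = couplings_marginals(1,2)[OF \<gamma>]
  note K_meas = reg_cond_dist_measurable[OF K]
  have "(\<integral>\<omega>. (2 - 2 * fst \<omega> $ j) * indicator {axis j 1} (snd \<omega>) \<partial>\<gamma>)
      = (\<integral>s. (2 - 2 * s $ j) * measure (K s) {axis j 1} \<partial>r)"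
    by (subst reg_cond_dist_integral[OF sets_\<gamma> K]) (simp_all add: r)
  then show ?thesis
    using integrable_kernel_measure[OF r_facts K_meas]
      integrable_nth_mult_kernel_measure[OF r_facts r_simplex K_meas]
    by (simp add: left_diff_distrib mult.assoc)
qed

lemma integral_l1dist_coupling:
  fixes r q :: "(real^'k) measure"
  assumes \<gamma>: "\<gamma> \<in> couplings r q" and K: "reg_cond_dist \<gamma> K"
    and r_simplex: "AE s in r. s \<in> prob_simplex" and q_labels: "AE y in q. y \<in> labels"
    and K_labels: "\<forall>s\<in>prob_simplex. emeasure (K s) labels = 1"
  shows "integrable \<gamma> (\<lambda>\<omega>. l1dist (fst \<omega>) (snd \<omega>))"
    and "(\<integral>\<omega>. l1dist (fst \<omega>) (snd \<omega>) \<partial>\<gamma>)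
           = 2 - 2 * (\<Sum>j\<in>UNIV. \<integral>s. s $ j * measure (K s) {axis j 1} \<partial>r)"
proof -
  have sets_\<gamma>[measurable_cong]: "sets \<gamma> = sets (borel \<Otimes>\<^sub>M borel)" and \<gamma>_prob: "prob_space \<gamma>"
    using \<gamma> by (auto simp: couplings_def)
  have AE_\<gamma>: "AE \<omega> in \<gamma>. fst \<omega> \<in> prob_simplex \<and> snd \<omega> \<in> labels"
    using AE_couplingI[OF \<gamma> _ _ r_simplex q_labels] by simp
  have cost_int: "integrable \<gamma> (\<lambda>\<omega>. (2 - 2 * fst \<omega> $ j) * indicator {axis j 1} (snd \<omega>))" for j
  proof (rule finite_measure.integrable_const_bound[OF prob_space.finite_measure[OF \<gamma>_prob], where B=2])
    show "AE \<omega> in \<gamma>. norm ((2 - 2 * fst \<omega> $ j) * indicator {axis j 1} (snd \<omega>)) \<le> 2"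
      using AE_\<gamma> by eventually_elim (auto simp: prob_simplex_def prob_simplex_nth_le_1 indicator_def)
  qed measurable
  have l1dist_eq: "AE \<omega> in \<gamma>. l1dist (fst \<omega>) (snd \<omega>)
      = (\<Sum>j\<in>UNIV. (2 - 2 * fst \<omega> $ j) * indicator {axis j 1} (snd \<omega>))"
    using AE_\<gamma> by eventually_elim (simp add: l1dist_prob_simplex_label indicator_axis_label)
  have l1dist_meas[measurable]: "(\<lambda>\<omega>. l1dist (fst \<omega>) (snd \<omega>)) \<in> borel_measurable \<gamma>"
    unfolding l1dist_def by measurable
  show "integrable \<gamma> (\<lambda>\<omega>. l1dist (fst \<omega>) (snd \<omega>))"
  proof (rule integrable_cong_AE_imp[OF _ l1dist_meas])
    show "integrable \<gamma> (\<lambda>\<omega>. \<Sum>j\<in>UNIV. (2 - 2 * fst \<omega> $ j) * indicator {axis j 1} (snd \<omega>))"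
      using cost_int by (rule Bochner_Integration.integrable_sum)
  qed (use l1dist_eq in \<open>simp add: eq_commute\<close>)
  have "(\<integral>\<omega>. l1dist (fst \<omega>) (snd \<omega>) \<partial>\<gamma>)
      = (\<integral>\<omega>. (\<Sum>j\<in>UNIV. (2 - 2 * fst \<omega> $ j) * indicator {axis j 1} (snd \<omega>)) \<partial>\<gamma>)"
    by (rule integral_cong_AE[OF l1dist_meas _ l1dist_eq]) measurable
  also have "\<dots> = (\<Sum>j\<in>UNIV. \<integral>\<omega>. (2 - 2 * fst \<omega> $ j) * indicator {axis j 1} (snd \<omega>) \<partial>\<gamma>)"
    by (intro Bochner_Integration.integral_sum cost_int)
  also have "\<dots> = 2 * (\<Sum>j\<in>UNIV. \<integral>s. measure (K s) {axis j 1} \<partial>r)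
      - 2 * (\<Sum>j\<in>UNIV. \<integral>s. s $ j * measure (K s) {axis j 1} \<partial>r)"
    by (simp only: integral_label_cost_coupling[OF \<gamma> K r_simplex] sum_subtractf sum_distrib_left)
  finally show "(\<integral>\<omega>. l1dist (fst \<omega>) (snd \<omega>) \<partial>\<gamma>)
      = 2 - 2 * (\<Sum>j\<in>UNIV. \<integral>s. s $ j * measure (K s) {axis j 1} \<partial>r)"
    using sum_integral_kernel_labels[OF couplings_marginals(1,2)[OF \<gamma>] r_simplex
        reg_cond_dist_measurable[OF K] K_labels]
    by simp
qed

lemma W1_optimal_coupling:
  fixes r q :: "(real^'k) measure"
  assumes \<gamma>: "optimal_coupling r q \<gamma>" and K: "reg_cond_dist \<gamma> K"
    and r_simplex: "AE s in r. s \<in> prob_simplex" and q_labels: "AE y in q. y \<in> labels"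
    and K_labels: "\<forall>s\<in>prob_simplex. emeasure (K s) labels = 1"
  shows "W1 r q = ennreal (2 - 2 * (\<Sum>j\<in>UNIV. \<integral>s. s $ j * measure (K s) {axis j 1} \<partial>r))"
proof -
  have coupling: "\<gamma> \<in> couplings r q"
    using \<gamma> by (simp add: optimal_coupling_def)
  have "W1 r q = (\<integral>\<^sup>+\<omega>. ennreal (l1dist (fst \<omega>) (snd \<omega>)) \<partial>\<gamma>)"
    using \<gamma> by (simp add: optimal_coupling_def)
  also have "\<dots> = ennreal (\<integral>\<omega>. l1dist (fst \<omega>) (snd \<omega>) \<partial>\<gamma>)"
    using integral_l1dist_coupling(1)[OF coupling K r_simplex q_labels K_labels]
    by (intro nn_integral_eq_integral) (auto simp: l1dist_def)
  finally show ?thesis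
    by (simp add: integral_l1dist_coupling(2)[OF coupling K r_simplex q_labels K_labels])
qed

section \<open>Conditioning on a random variable\<close>

lemma emeasure_distr_density:
  fixes u :: "'a \<Rightarrow> real"
  assumes X[measurable]: "X \<in> M \<rightarrow>\<^sub>M N" and u[measurable]: "u \<in> borel_measurable M"
    and u_nonneg: "AE \<omega> in M. 0 \<le> u \<omega>" and "integrable M u" and B[measurable]: "B \<in> sets N"
  shows "emeasure (distr (density M u) N X) B = ennreal (\<integral>\<omega>. indicator B (X \<omega>) * u \<omega> \<partial>M)"
proof -
  have "emeasure (distr (density M u) N X) B = (\<integral>\<^sup>+\<omega>. ennreal (indicator B (X \<omega>) * u \<omega>) \<partial>M)"
    by (subst emeasure_distr, measurable, subst emeasure_density)
      (auto intro!: nn_integral_cong simp: indicator_def)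
  also have "\<dots> = ennreal (\<integral>\<omega>. indicator B (X \<omega>) * u \<omega> \<partial>M)"
  proof (rule nn_integral_eq_integral)
    show "integrable M (\<lambda>\<omega>. indicator B (X \<omega>) * u \<omega>)"
      by (rule Bochner_Integration.integrable_bound[OF \<open>integrable M u\<close>]) (measurable, auto split: split_indicator)
  qed (use u_nonneg in \<open>auto split: split_indicator\<close>)
  finally show ?thesis .
qed

lemma integral_distr_density:
  fixes u g :: "_ \<Rightarrow> real"
  assumes [measurable]: "X \<in> M \<rightarrow>\<^sub>M N" "u \<in> borel_measurable M" "g \<in> borel_measurable N"
    and "AE \<omega> in M. 0 \<le> u \<omega>"
  shows "(\<integral>\<omega>. g (X \<omega>) * u \<omega> \<partial>M) = integral\<^sup>L (distr (density M u) N X) g"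
  using assms by (subst integral_distr, measurable, subst integral_density) (auto simp: mult.commute)

(* Both sides integrate g against the image under X of density M h, resp. density M F, and the
   hypothesis eq says that these two image measures agree. *)
lemma integral_comp_mult_eqI:
  fixes h F :: "'a \<Rightarrow> real" and g :: "'b \<Rightarrow> real"
  assumes X: "X \<in> M \<rightarrow>\<^sub>M N"
    and h: "h \<in> borel_measurable M" "AE \<omega> in M. 0 \<le> h \<omega>" "integrable M h"
    and F: "F \<in> borel_measurable M" "AE \<omega> in M. 0 \<le> F \<omega>" "integrable M F"
    and eq: "\<And>B. B \<in> sets N \<Longrightarrow> (\<integral>\<omega>. indicator B (X \<omega>) * h \<omega> \<partial>M) = (\<integral>\<omega>. indicator B (X \<omega>) * F \<omega> \<partial>M)"
    and g: "g \<in> borel_measurable N"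
  shows "(\<integral>\<omega>. g (X \<omega>) * h \<omega> \<partial>M) = (\<integral>\<omega>. g (X \<omega>) * F \<omega> \<partial>M)"
proof -
  have "distr (density M h) N X = distr (density M F) N X"
    by (rule measure_eqI) (simp_all add: emeasure_distr_density[OF X h] emeasure_distr_density[OF X F] eq)
  then show ?thesis
    by (simp add: integral_distr_density[OF X h(1) g h(2)] integral_distr_density[OF X F(1) g F(2)])
qed

lemma integral_kernel_error:
  fixes C :: "'a measure" and Y S :: "'a \<Rightarrow> real^'k"
  assumes C: "prob_space C" and [measurable]: "Y \<in> borel_measurable C" "S \<in> borel_measurable C"
    and Y_labels: "AE \<omega> in C. Y \<omega> \<in> labels"
    and K_meas[measurable]: "K \<in> borel \<rightarrow>\<^sub>M prob_algebra borel"
    and K_labels: "\<forall>\<omega>\<in>space C. emeasure (K (S \<omega>)) labels = 1"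
      \<comment> \<open>needed pointwise, not just AE: it makes the integrand equal to a measurable function\<close>
    and tower: "\<And>g j. g \<in> borel_measurable borel \<Longrightarrow>
      (\<integral>\<omega>. g (S \<omega>) * Y \<omega> $ j \<partial>C) = (\<integral>\<omega>. g (S \<omega>) * S \<omega> $ j \<partial>C)"
  shows "(\<integral>\<omega>. measure (K (S \<omega>)) (space (K (S \<omega>)) - {Y \<omega>}) \<partial>C)
       = 1 - (\<Sum>j\<in>UNIV. \<integral>s. s $ j * measure (K s) {axis j 1} \<partial>distr C borel S)"
proof -
  note measurable_kernel_measure[OF K_meas, measurable]
  have K: "prob_space (K s)" "sets (K s) = sets borel" for s
    using prob_kernelD[OF K_meas] by simp_all
  have hit_int: "integrable C (\<lambda>\<omega>. indicator {axis j 1} (Y \<omega>) * measure (K (S \<omega>)) {axis j 1})" for j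
    by (rule finite_measure.integrable_const_bound[OF prob_space.finite_measure[OF C], where B=1])
      (auto simp: indicator_def prob_space.prob_le_1[OF K(1)])
  have "(\<integral>\<omega>. measure (K (S \<omega>)) (space (K (S \<omega>)) - {Y \<omega>}) \<partial>C)
      = (\<integral>\<omega>. 1 - (\<Sum>j\<in>UNIV. indicator {axis j 1} (Y \<omega>) * measure (K (S \<omega>)) {axis j 1}) \<partial>C)"
    using K_labels by (intro Bochner_Integration.integral_cong refl measure_compl_singleton_labels K) auto
  also have "\<dots> = (\<integral>\<omega>. 1 \<partial>C) - (\<integral>\<omega>. (\<Sum>j\<in>UNIV. indicator {axis j 1} (Y \<omega>) * measure (K (S \<omega>)) {axis j 1}) \<partial>C)"
    by (intro Bochner_Integration.integral_diff Bochner_Integration.integrable_sum hit_int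
        finite_measure.integrable_const prob_space.finite_measure C)
  also have "\<dots> = 1 - (\<Sum>j\<in>UNIV. \<integral>\<omega>. indicator {axis j 1} (Y \<omega>) * measure (K (S \<omega>)) {axis j 1} \<partial>C)"
    by (subst Bochner_Integration.integral_sum[OF hit_int]) (simp add: prob_space.prob_space[OF C])
  also have "\<dots> = 1 - (\<Sum>j\<in>UNIV. \<integral>\<omega>. measure (K (S \<omega>)) {axis j 1} * Y \<omega> $ j \<partial>C)"
    using Y_labels
    by (intro arg_cong2[where f="(-)"] sum.cong refl integral_cong_AE)
      (auto elim!: AE_mp simp: indicator_axis_label mult.commute)
  also have "\<dots> = 1 - (\<Sum>j\<in>UNIV. \<integral>s. s $ j * measure (K s) {axis j 1} \<partial>distr C borel S)"
  proof -
    have "(\<lambda>s. measure (K s) {axis j 1}) \<in> borel_measurable borel" for j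
      by measurable
    from tower[OF this] show ?thesis
      by (simp add: integral_distr mult.commute)
  qed
  finally show ?thesis .
qed

section \<open>Classifiers induced by the Bayes regressor\<close>

lemma classification_problem_sets:
  "classification_problem m M \<Longrightarrow> sets M = sets (borel \<Otimes>\<^sub>M borel \<Otimes>\<^sub>M count_space UNIV)"
  by (simp add: classification_problem_def)

lemma sets_cond_group[simp, measurable_cong]: "sets (cond_group M a) = sets M"
  by (simp add: cond_group_def)

lemma group_event_in_sets:
  assumes "classification_problem m M"
  shows "{\<omega>\<in>space M. snd (snd \<omega>) = a} \<in> sets M"
  using classification_problem_sets[OF assms, measurable_cong] by measurable

lemma measure_group_event_pos:
  assumes "classification_problem m M" "a \<in> {1..m}"
  shows "measure M {\<omega>\<in>space M. snd (snd \<omega>) = a} > 0"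
  using assms unfolding classification_problem_def by blast

lemma prob_space_cond_group:
  assumes M: "classification_problem m M" and a: "a \<in> {1..m}"
  shows "prob_space (cond_group M a)"
  using measure_group_event_pos[OF M a] M unfolding cond_group_def classification_problem_def
  by (intro prob_space_uniform_measure) (auto simp: finite_measure.emeasure_eq_measure prob_space.finite_measure)

lemma AE_cond_group:
  assumes "classification_problem m M" "AE \<omega> in M. P \<omega>"
  shows "AE \<omega> in cond_group M a. P \<omega>"
  unfolding cond_group_def using assms(2)
  by (intro AE_uniform_measureI group_event_in_sets[OF assms(1)]) (auto elim: AE_mp)

lemma integral_cond_group:
  fixes h :: "_ \<Rightarrow> real"
  assumes M: "classification_problem m M" and a: "a \<in> {1..m}" and h: "h \<in> borel_measurable M"
  defines "A \<equiv> {\<omega>\<in>space M. snd (snd \<omega>) = a}"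
  shows "integral\<^sup>L (cond_group M a) h = (\<integral>\<omega>. indicator A \<omega> * h \<omega> \<partial>M) / measure M A"
proof -
  have A: "A \<in> sets M" "measure M A > 0" "emeasure M A = measure M A"
    using M group_event_in_sets[OF M] measure_group_event_pos[OF M a]
    by (auto simp: A_def classification_problem_def finite_measure.emeasure_eq_measure prob_space.finite_measure)
  then have "cond_group M a = density M (\<lambda>\<omega>. ennreal (indicator A \<omega> / measure M A))"
    by (auto simp: cond_group_def uniform_measure_def A_def indicator_def divide_ennreal
        simp flip: ennreal_1 intro!: density_cong)
  then show ?thesis
    using A h by (simp add: integral_density)
qed

lemma bayes_regressor_measurable:
  assumes "bayes_regressor m M f"
  shows "(\<lambda>x. f x a) \<in> borel_measurable borel"
proof -
  have "(\<lambda>x. (x, a)) \<in> borel \<rightarrow>\<^sub>M borel \<Otimes>\<^sub>M count_space UNIV"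
    by simp
  moreover have "(\<lambda>(x, a). f x a) \<in> borel_measurable (borel \<Otimes>\<^sub>M count_space UNIV)"
    using assms by (simp add: bayes_regressor_def)
  ultimately show ?thesis
    by (auto dest: measurable_compose)
qed

lemma norm_le_1_prob_simplex: "s \<in> prob_simplex \<Longrightarrow> norm s \<le> 1"
  using norm_le_l1_cart[of s] by (simp add: prob_simplex_def)

lemma bayes_regressor_nth:
  fixes M :: "('x::polish_space \<times> (real^'k) \<times> nat) measure"
  assumes M: "classification_problem m M" and f: "bayes_regressor m M f" and a: "a \<in> {1..m}"
    and B[measurable]: "B \<in> sets borel"
  defines "S \<equiv> {\<omega>. fst \<omega> \<in> B \<and> snd (snd \<omega>) = a}"
  shows "(\<integral>\<omega>. indicator S \<omega> * fst (snd \<omega>) $ j \<partial>M)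
       = (\<integral>\<omega>. indicator S \<omega> * f (fst \<omega>) (snd (snd \<omega>)) $ j \<partial>M)"
proof -
  note sets_M[measurable_cong] = classification_problem_sets[OF M]
  have f_meas[measurable]: "(\<lambda>(x, a). f x a) \<in> borel_measurable (borel \<Otimes>\<^sub>M count_space UNIV)"
    using f by (simp add: bayes_regressor_def)
  have "S = {\<omega>\<in>space M. fst \<omega> \<in> B \<and> snd (snd \<omega>) = a}"
    using sets_eq_imp_space_eq[OF sets_M] by (simp add: S_def space_pair_measure)
  also have "\<dots> \<in> sets M"
    by measurable
  finally have S_meas[measurable]: "S \<in> sets M" .
  have M_fin: "finite_measure M"
    using M by (simp add: classification_problem_def prob_space.finite_measure)
  have label_int: "integrable M (\<lambda>\<omega>. indicator S \<omega> *\<^sub>R fst (snd \<omega>))"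
  proof (rule finite_measure.integrable_const_bound[OF M_fin, where B=1])
    show "AE \<omega> in M. norm (indicator S \<omega> *\<^sub>R fst (snd \<omega>)) \<le> 1"
      using M unfolding classification_problem_def
      by (auto elim!: AE_mp simp: labels_def indicator_def)
  qed measurable
  have regressor_int: "integrable M (\<lambda>\<omega>. indicator S \<omega> *\<^sub>R f (fst \<omega>) (snd (snd \<omega>)))"
  proof (rule finite_measure.integrable_const_bound[OF M_fin, where B=1])
    show "AE \<omega> in M. norm (indicator S \<omega> *\<^sub>R f (fst \<omega>) (snd (snd \<omega>))) \<le> 1"
      using f a by (auto simp: bayes_regressor_def S_def indicator_def norm_le_1_prob_simplex)
  qed measurable
  have "(\<integral>\<omega>. indicator S \<omega> *\<^sub>R fst (snd \<omega>) \<partial>M) $ j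
      = (\<integral>\<omega>. indicator S \<omega> *\<^sub>R f (fst \<omega>) (snd (snd \<omega>)) \<partial>M) $ j"
    using f a B by (simp add: bayes_regressor_def S_def)
  then show ?thesis
    by (simp add: integral_bounded_linear[OF bounded_linear_vec_nth label_int, symmetric]
        integral_bounded_linear[OF bounded_linear_vec_nth regressor_int, symmetric])
qed

lemma bayes_regressor_cond_group_indicator:
  fixes M :: "('x::polish_space \<times> (real^'k) \<times> nat) measure"
  assumes M: "classification_problem m M" and f: "bayes_regressor m M f" and a: "a \<in> {1..m}"
    and B: "B \<in> sets borel"
  shows "(\<integral>\<omega>. indicator B (fst \<omega>) * fst (snd \<omega>) $ j \<partial>cond_group M a)
       = (\<integral>\<omega>. indicator B (fst \<omega>) * f (fst \<omega>) a $ j \<partial>cond_group M a)"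
proof -
  note sets_M[measurable_cong] = classification_problem_sets[OF M]
  note bayes_regressor_measurable[OF f, measurable]
  define A where "A = {\<omega>\<in>space M. snd (snd \<omega>) = a}"
  have space_M: "space M = UNIV"
    using sets_eq_imp_space_eq[OF sets_M] by (simp add: space_pair_measure)
  have "(\<integral>\<omega>. indicator A \<omega> * (indicator B (fst \<omega>) * fst (snd \<omega>) $ j) \<partial>M)
      = (\<integral>\<omega>. indicator {\<omega>. fst \<omega> \<in> B \<and> snd (snd \<omega>) = a} \<omega> * fst (snd \<omega>) $ j \<partial>M)"
    by (rule Bochner_Integration.integral_cong) (auto simp: A_def space_M indicator_def)
  also have "\<dots> = (\<integral>\<omega>. indicator {\<omega>. fst \<omega> \<in> B \<and> snd (snd \<omega>) = a} \<omega> * f (fst \<omega>) (snd (snd \<omega>)) $ j \<partial>M)"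
    by (rule bayes_regressor_nth[OF M f a B])
  also have "\<dots> = (\<integral>\<omega>. indicator A \<omega> * (indicator B (fst \<omega>) * f (fst \<omega>) a $ j) \<partial>M)"
    by (rule Bochner_Integration.integral_cong) (auto simp: A_def space_M indicator_def)
  finally have "(\<integral>\<omega>. indicator A \<omega> * (indicator B (fst \<omega>) * fst (snd \<omega>) $ j) \<partial>M)
      = (\<integral>\<omega>. indicator A \<omega> * (indicator B (fst \<omega>) * f (fst \<omega>) a $ j) \<partial>M)" .
  with B show ?thesis
    by (simp add: integral_cond_group[OF M a] A_def)
qed

lemma bayes_regressor_cond_group:
  fixes M :: "('x::polish_space \<times> (real^'k) \<times> nat) measure"
  assumes M: "classification_problem m M" and f: "bayes_regressor m M f" and a: "a \<in> {1..m}"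
    and g: "g \<in> borel_measurable borel"
  shows "(\<integral>\<omega>. g (fst \<omega>) * fst (snd \<omega>) $ j \<partial>cond_group M a)
       = (\<integral>\<omega>. g (fst \<omega>) * f (fst \<omega>) a $ j \<partial>cond_group M a)"
proof -
  note sets_M[measurable_cong] = classification_problem_sets[OF M]
  note bayes_regressor_measurable[OF f, measurable]
  have C_fin: "finite_measure (cond_group M a)"
    using prob_space_cond_group[OF M a] by (rule prob_space.finite_measure)
  have Y_labels: "AE \<omega> in cond_group M a. fst (snd \<omega>) \<in> labels"
    using M by (intro AE_cond_group[OF M]) (auto simp: classification_problem_def)
  have f_simplex: "f x a \<in> prob_simplex" for x
    using f a by (simp add: bayes_regressor_def)
  show ?thesis
  proof (rule integral_comp_mult_eqI[where X=fst and N=borel])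
    show "AE \<omega> in cond_group M a. 0 \<le> fst (snd \<omega>) $ j"
      using Y_labels by eventually_elim (auto simp: labels_def axis_def)
    show "integrable (cond_group M a) (\<lambda>\<omega>. fst (snd \<omega>) $ j)"
      by (rule finite_measure.integrable_const_bound[OF C_fin, where B=1])
        (use Y_labels in \<open>auto elim!: AE_mp simp: labels_def axis_def\<close>, measurable)
    show "AE \<omega> in cond_group M a. 0 \<le> f (fst \<omega>) a $ j"
      using f_simplex by (simp add: prob_simplex_def)
    show "integrable (cond_group M a) (\<lambda>\<omega>. f (fst \<omega>) a $ j)"
      by (rule finite_measure.integrable_const_bound[OF C_fin, where B=1])
        (use f_simplex in \<open>auto simp: prob_simplex_def prob_simplex_nth_le_1\<close>, measurable)
  qed (auto intro: bayes_regressor_cond_group_indicator[OF M f a] g)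
qed

lemma distr_marg_X:
  fixes M :: "('x::polish_space \<times> (real^'k) \<times> nat) measure"
  assumes M: "classification_problem m M" and f: "bayes_regressor m M f"
  shows "distr (marg_X M a) borel (\<lambda>x. f x a) = distr (cond_group M a) borel (\<lambda>\<omega>. f (fst \<omega>) a)"
proof -
  note sets_M[measurable_cong] = classification_problem_sets[OF M]
  note bayes_regressor_measurable[OF f, measurable]
  show ?thesis
    unfolding marg_X_def by (subst distr_distr) (auto simp: comp_def)
qed

lemma err_group_bayes_kernel:
  fixes M :: "('x::polish_space \<times> (real^'k) \<times> nat) measure"
  assumes M: "classification_problem m M" and f: "bayes_regressor m M f" and a: "a \<in> {1..m}"
    and L_meas: "L \<in> borel \<rightarrow>\<^sub>M prob_algebra borel"
    and L_labels: "\<forall>s\<in>prob_simplex. emeasure (L s) labels = 1"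
  shows "err_group M (\<lambda>x b. L (f x b)) a
       = 1 - (\<Sum>j\<in>UNIV. \<integral>s. s $ j * measure (L s) {axis j 1} \<partial>distr (marg_X M a) borel (\<lambda>x. f x a))"
proof -
  note sets_M[measurable_cong] = classification_problem_sets[OF M]
  note f_meas[measurable] = bayes_regressor_measurable[OF f]
  have "(\<integral>\<omega>. g (f (fst \<omega>) a) * fst (snd \<omega>) $ j \<partial>cond_group M a)
      = (\<integral>\<omega>. g (f (fst \<omega>) a) * f (fst \<omega>) a $ j \<partial>cond_group M a)"
    if g[measurable]: "g \<in> borel_measurable borel" for g j
    using bayes_regressor_cond_group[OF M f a, of "\<lambda>x. g (f x a)"] by measurable
  moreover have "AE \<omega> in cond_group M a. fst (snd \<omega>) \<in> labels"
    using M by (intro AE_cond_group[OF M]) (auto simp: classification_problem_def)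
  moreover have "\<forall>\<omega>\<in>space (cond_group M a). emeasure (L (f (fst \<omega>) a)) labels = 1"
    using f a L_labels by (simp add: bayes_regressor_def)
  ultimately show ?thesis
    unfolding err_group_def distr_marg_X[OF M f]
    by (intro integral_kernel_error prob_space_cond_group[OF M a] L_meas) measurable
qed

lemma pred_prob_coupling_kernel:
  fixes M :: "('x::polish_space \<times> (real^'k) \<times> nat) measure"
  assumes M: "classification_problem m M" and f: "bayes_regressor m M f"
    and \<gamma>: "\<gamma> \<in> couplings (distr (marg_X M a) borel (\<lambda>x. f x a)) q" and L: "reg_cond_dist \<gamma> L"
  shows "pred_prob M (\<lambda>x b. L (f x b)) a y = measure q {y}"
proof -
  note sets_M[measurable_cong] = classification_problem_sets[OF M]
  note bayes_regressor_measurable[OF f, measurable]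
  note measurable_kernel_measure[OF reg_cond_dist_measurable[OF L], measurable]
  have "pred_prob M (\<lambda>x b. L (f x b)) a y = (\<integral>s. measure (L s) {y} \<partial>distr (marg_X M a) borel (\<lambda>x. f x a))"
    unfolding pred_prob_def distr_marg_X[OF M f] by (subst integral_distr) auto
  also have "\<dots> = measure q {y}"
    using integral_kernel_coupling[OF \<gamma> L] by simp
  finally show ?thesis .
qed

lemma Qk_AE_labels: "Qk q \<Longrightarrow> AE y in q. y \<in> labels"
  by (intro prob_space.AE_prob_1)
    (auto simp: Qk_def finite_measure.emeasure_eq_measure prob_space.finite_measure)

lemma AE_bayes_regressor_prob_simplex:
  fixes M :: "('x::polish_space \<times> (real^'k) \<times> nat) measure"
  assumes M: "classification_problem m M" and f: "bayes_regressor m M f" and a: "a \<in> {1..m}"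
  shows "AE s in distr (marg_X M a) borel (\<lambda>x. f x a). s \<in> prob_simplex"
proof -
  note sets_M[measurable_cong] = classification_problem_sets[OF M]
  note bayes_regressor_measurable[OF f, measurable]
  have "f x a \<in> prob_simplex" for x
    using f a by (simp add: bayes_regressor_def)
  then show ?thesis
    unfolding distr_marg_X[OF M f] by (subst AE_distr_iff) auto
qed

lemma W1_eq_twice_err_group:
  fixes M :: "('x::polish_space \<times> (real^'k) \<times> nat) measure"
  assumes M: "classification_problem m M" and f: "bayes_regressor m M f" and q: "Qk q"
    and a: "a \<in> {1..m}"
    and \<gamma>: "optimal_coupling (distr (marg_X M a) borel (\<lambda>x. f x a)) q \<gamma>" and L: "reg_cond_dist \<gamma> L"
    and L_labels: "\<forall>s\<in>prob_simplex. emeasure (L s) labels = 1"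
  shows "W1 (distr (marg_X M a) borel (\<lambda>x. f x a)) q = ennreal (2 * err_group M (\<lambda>x b. L (f x b)) a)"
  using W1_optimal_coupling[OF \<gamma> L AE_bayes_regressor_prob_simplex[OF M f a] Qk_AE_labels[OF q] L_labels]
    err_group_bayes_kernel[OF M f a reg_cond_dist_measurable[OF L] L_labels]
  by simp

theorem theorem3p3:
  fixes M :: "('x::polish_space \<times> (real^'k) \<times> nat) measure"
    and m :: nat
    and f :: "'x \<Rightarrow> nat \<Rightarrow> real^'k"
    and q :: "(real^'k) measure"
    and \<gamma> :: "nat \<Rightarrow> ((real^'k) \<times> (real^'k)) measure"
    and K :: "nat \<Rightarrow> real^'k \<Rightarrow> (real^'k) measure"
  defines "r \<equiv> (\<lambda>a. distr (marg_X M a) borel (\<lambda>x. f x a))"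
  defines "hbar \<equiv> (\<lambda>x a. K a (f x a))"
  assumes "CARD('k) \<ge> 2"
    and "classification_problem m M"
    and "bayes_regressor m M f"
    and "Qk q"
    and "\<forall>a\<in>{1..m}. optimal_coupling (r a) q (\<gamma> a)"
    and "\<forall>a\<in>{1..m}. reg_cond_dist (\<gamma> a) (K a)"
    and "\<forall>a\<in>{1..m}. \<forall>s\<in>prob_simplex. emeasure (K a s) labels = 1"
  shows "ennreal (\<Sum>a\<in>{1..m}. err_group M hbar a) = (\<Sum>a\<in>{1..m}. W1 (r a) q) / 2
         \<and> (\<forall>a\<in>{1..m}. \<forall>y\<in>labels. pred_prob M hbar a y = measure q {y})
         \<and> demographic_parity m M hbar"
proof -
  have hbar_group: "err_group M hbar a = err_group M (\<lambda>x b. K a (f x b)) a"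
    "pred_prob M hbar a y = pred_prob M (\<lambda>x b. K a (f x b)) a y" for a y
    by (simp_all add: hbar_def err_group_def pred_prob_def)
  have group: "optimal_coupling (r a) q (\<gamma> a)" "reg_cond_dist (\<gamma> a) (K a)"
    "\<forall>s\<in>prob_simplex. emeasure (K a s) labels = 1" if "a \<in> {1..m}" for a
    using assms(7-9) that by auto
  have W1_err: "W1 (r a) q = ennreal (2 * err_group M hbar a)" if "a \<in> {1..m}" for a
    using W1_eq_twice_err_group[OF assms(4-6) that group[OF that, unfolded r_def]]
    by (simp add: hbar_group r_def)
  have parity: "pred_prob M hbar a y = measure q {y}" if "a \<in> {1..m}" for a y
    using pred_prob_coupling_kernel[OF assms(4,5) _ group(2)[OF that]] group(1)[OF that]
    by (simp add: hbar_group r_def optimal_coupling_def)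
  have err_nonneg: "0 \<le> err_group M hbar a" for a
    unfolding err_group_def by (simp add: Bochner_Integration.integral_nonneg)
  have "(\<Sum>a\<in>{1..m}. W1 (r a) q) = (\<Sum>a\<in>{1..m}. ennreal (err_group M hbar a)) * 2"
    using W1_err by (simp add: sum_distrib_left sum_distrib_right ennreal_mult' mult.commute)
  also have "\<dots> = ennreal (\<Sum>a\<in>{1..m}. err_group M hbar a) * 2"
    using err_nonneg by (simp add: sum_ennreal)
  finally have "(\<Sum>a\<in>{1..m}. W1 (r a) q) / 2 = ennreal (\<Sum>a\<in>{1..m}. err_group M hbar a)"
    by (simp add: ennreal_mult_divide_eq)
  with parity show ?thesis
    by (simp add: demographic_parity_def)
qed

end
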